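(* Let $\rho\in[0,1)$. Then \[ (1-3\rho+2\rho^{n+1})n+3\rho^{n+1}\ge3\rho\quad\text{for all integers } n\ge1 \] holds if and only if $\rho\in[0,\tfrac15]$. *)

theory Defs
  imports Complex_Main
begin

end

theory Submission
  imports Defs
begin

text \<open>At \<open>n = 1\<close> the inequality reads \<open>(1 - 5\<rho>)(1 - \<rho>) \<ge> 0\<close>, which for \<open>\<rho> < 1\<close>
  forces \<open>\<rho> \<le> 1/5\<close>. Conversely, for \<open>n \<ge> 2\<close> the terms with \<open>\<rho>^(n+1)\<close> are nonnegative
  and \<open>(1 - 3\<rho>) n \<ge> 2 - 6\<rho> \<ge> 3\<rho>\<close> as soon as \<open>\<rho> \<le> 2/9\<close>.\<close>

lemma ineq_n_eq_1_iff:
  fixes \<rho> :: real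
  assumes "\<rho> < 1"
  shows "3 * \<rho> \<le> 1 - 3 * \<rho> + 2 * \<rho>\<^sup>2 + 3 * \<rho>\<^sup>2 \<longleftrightarrow> \<rho> \<le> 1 / 5"
proof -
  have "1 - 3 * \<rho> + 2 * \<rho>\<^sup>2 + 3 * \<rho>\<^sup>2 - 3 * \<rho> = (1 - 5 * \<rho>) * (1 - \<rho>)"
    by (simp add: algebra_simps power2_eq_square)
  moreover have "0 \<le> (1 - 5 * \<rho>) * (1 - \<rho>) \<longleftrightarrow> 0 \<le> 1 - 5 * \<rho>"
    using assms by (simp add: zero_le_mult_iff)
  ultimately show ?thesis by linarith
qed

lemma ineq_n_ge_2:
  fixes \<rho> :: real and n :: nat
  assumes "0 \<le> \<rho>" and "\<rho> \<le> 2 / 9" and "n \<ge> 2"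
  shows "3 * \<rho> \<le> (1 - 3 * \<rho> + 2 * \<rho> ^ (n + 1)) * real n + 3 * \<rho> ^ (n + 1)"
proof -
  have pow_nonneg: "0 \<le> \<rho> ^ (n + 1)"
    using assms(1) by simp
  then have "0 \<le> 2 * \<rho> ^ (n + 1) * real n"
    by simp
  have "3 * \<rho> \<le> (1 - 3 * \<rho>) * 2"
    using assms(2) by simp
  also have "\<dots> \<le> (1 - 3 * \<rho>) * real n"
    using assms by (intro mult_left_mono) auto
  also have "\<dots> \<le> (1 - 3 * \<rho> + 2 * \<rho> ^ (n + 1)) * real n + 3 * \<rho> ^ (n + 1)"
    using pow_nonneg \<open>0 \<le> 2 * \<rho> ^ (n + 1) * real n\<close> by (simp add: algebra_simps)
  finally show ?thesis .
qed

theorem lemma4p2: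
  fixes \<rho> :: real
  assumes "0 \<le> \<rho>" and "\<rho> < 1"
  shows "(\<forall>n::nat. n \<ge> 1 \<longrightarrow>
            (1 - 3 * \<rho> + 2 * \<rho> ^ (n + 1)) * real n + 3 * \<rho> ^ (n + 1) \<ge> 3 * \<rho>)
         \<longleftrightarrow> \<rho> \<le> 1 / 5"
proof
  assume ineq: "\<forall>n::nat. n \<ge> 1 \<longrightarrow>
            (1 - 3 * \<rho> + 2 * \<rho> ^ (n + 1)) * real n + 3 * \<rho> ^ (n + 1) \<ge> 3 * \<rho>"
  have "3 * \<rho> \<le> 1 - 3 * \<rho> + 2 * \<rho>\<^sup>2 + 3 * \<rho>\<^sup>2"
    using ineq[rule_format, of 1] by (simp add: power2_eq_square)
  then show "\<rho> \<le> 1 / 5"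
    using ineq_n_eq_1_iff assms(2) by blast
next
  assume "\<rho> \<le> 1 / 5"
  show "\<forall>n::nat. n \<ge> 1 \<longrightarrow>
            (1 - 3 * \<rho> + 2 * \<rho> ^ (n + 1)) * real n + 3 * \<rho> ^ (n + 1) \<ge> 3 * \<rho>"
  proof (intro allI impI)
    fix n :: nat
    assume "n \<ge> 1"
    then consider "n = 1" | "n \<ge> 2" by linarith
    then show "(1 - 3 * \<rho> + 2 * \<rho> ^ (n + 1)) * real n + 3 * \<rho> ^ (n + 1) \<ge> 3 * \<rho>"
    proof cases
      case 1
      have "3 * \<rho> \<le> 1 - 3 * \<rho> + 2 * \<rho>\<^sup>2 + 3 * \<rho>\<^sup>2"
        using ineq_n_eq_1_iff assms(2) \<open>\<rho> \<le> 1 / 5\<close> by blast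
      then show ?thesis
        using 1 by (simp add: power2_eq_square)
    next
      case 2
      then show ?thesis
        using ineq_n_ge_2 assms(1) \<open>\<rho> \<le> 1 / 5\<close> by simp
    qed
  qed
qed

end
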